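(* No vector $(x_\alpha,\dots,x_1)$ with $\alpha\ge3$ and $x_{\alpha-2}=1$ is realizable.
   Context: All graphs are finite, nonempty, and reflexive (every vertex has a loop). $N[v]$ is the closed neighborhood of $v$ (including $v$). For distinct $v,w$, $w$ strictly corners $v$ if $N[v]\subsetneq N[w]$; $v$ is then a strict corner. Corner ranking: set $G^{(1)}=G$, $k=1$. If $G^{(k)}$ is a clique, give all its vertices rank $k$ and stop. Else if $G^{(k)}$ has no strict corners, give all its vertices rank $\infty$ and stop. Else give every strict corner of $G^{(k)}$ rank $k$, delete them to get $G^{(k+1)}$ (induced subgraph), increase $k$ and repeat. The corner rank is the largest rank of a vertex; $X_k$ is the set of rank-$k$ vertices; cop-win graphs are exactly those of finite corner rank. A vector is a finite list of positive integers; the rank cardinality vector of a graph of corner rank $\alpha$ is $(x_\alpha,\dots,x_1)$ with $x_k=|X_k|$; a vector is realizable if it is the rank cardinality vector of some cop-win graph. *)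

theory Defs
  imports Main
begin

definition refl_graph :: "'a set \<Rightarrow> ('a \<Rightarrow> 'a \<Rightarrow> bool) \<Rightarrow> bool" where
  "refl_graph V E \<longleftrightarrow> finite V \<and> V \<noteq> {} \<and> (\<forall>v\<in>V. E v v) \<and>
     (\<forall>u\<in>V. \<forall>v\<in>V. E u v \<longrightarrow> E v u)"

definition cnbh :: "('a \<Rightarrow> 'a \<Rightarrow> bool) \<Rightarrow> 'a set \<Rightarrow> 'a \<Rightarrow> 'a set" where
  "cnbh E S v = {w \<in> S. E v w}"

definition is_clique :: "('a \<Rightarrow> 'a \<Rightarrow> bool) \<Rightarrow> 'a set \<Rightarrow> bool" where
  "is_clique E S \<longleftrightarrow> (\<forall>u\<in>S. \<forall>v\<in>S. E u v)"

definition strict_corners :: "('a \<Rightarrow> 'a \<Rightarrow> bool) \<Rightarrow> 'a set \<Rightarrow> 'a set" where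
  "strict_corners E S = {v \<in> S. \<exists>w\<in>S. w \<noteq> v \<and> cnbh E S v \<subset> cnbh E S w}"

text \<open>stage E V k is the vertex set of G^(k+1); it becomes empty once the process stops at a
  clique, and stays constant once it stops with no strict corners.\<close>
fun stage :: "('a \<Rightarrow> 'a \<Rightarrow> bool) \<Rightarrow> 'a set \<Rightarrow> nat \<Rightarrow> 'a set" where
  "stage E V 0 = V"
| "stage E V (Suc k) = (if is_clique E (stage E V k) then {}
                        else stage E V k - strict_corners E (stage E V k))"

text \<open>X_k, the set of vertices of rank k (k \<ge> 1).\<close>
definition rank_set :: "('a \<Rightarrow> 'a \<Rightarrow> bool) \<Rightarrow> 'a set \<Rightarrow> nat \<Rightarrow> 'a set" where
  "rank_set E V k = (let S = stage E V (k - 1) in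
      if is_clique E S then S else strict_corners E S)"

text \<open>Cop-win = finite corner rank = every vertex receives a finite rank.\<close>
definition cop_win :: "'a set \<Rightarrow> ('a \<Rightarrow> 'a \<Rightarrow> bool) \<Rightarrow> bool" where
  "cop_win V E \<longleftrightarrow> refl_graph V E \<and> (\<exists>k. stage E V k = {})"

definition corner_rank :: "'a set \<Rightarrow> ('a \<Rightarrow> 'a \<Rightarrow> bool) \<Rightarrow> nat" where
  "corner_rank V E = (LEAST k. stage E V k = {})"

text \<open>Rank cardinality vector (x_alpha, ..., x_1) as a list.\<close>
definition rank_card_vector :: "'a set \<Rightarrow> ('a \<Rightarrow> 'a \<Rightarrow> bool) \<Rightarrow> nat list" where
  "rank_card_vector V E = rev (map (\<lambda>k. card (rank_set E V k)) [1..<corner_rank V E + 1])"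

text \<open>Realizable: the rank cardinality vector of some cop-win graph (vertices taken in nat,
  which is no loss of generality for finite graphs).\<close>
definition realizable :: "nat list \<Rightarrow> bool" where
  "realizable xs \<longleftrightarrow> (\<exists>(V::nat set) E. cop_win V E \<and> rank_card_vector V E = xs)"

end

theory Submission
  imports Defs
begin

text \<open>Let H be the stage whose strict corners have rank \<alpha> - 2. As exactly one vertex has
  that rank, H has a single strict corner u; H - {u} is not a clique, but its non-corners (the
  last stage) are. From this one finds a universal vertex y of H. Then every vertex of H - {u}
  has the whole of H as neighbourhood, for otherwise y would strictly corner it; so H - {u} is
  a clique after all.\<close>

lemma mem_cnbh [simp]: "w \<in> cnbh E S v \<longleftrightarrow> w \<in> S \<and> E v w"
  by (simp add: cnbh_def)

lemma exists_non_strict_corner_dominator: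
  assumes "finite S" and "v \<in> S"
  obtains w where "w \<in> S - strict_corners E S" and "cnbh E S v \<subseteq> cnbh E S w"
proof -
  obtain M where M: "M \<in> cnbh E S ` S" "cnbh E S v \<subseteq> M"
    and max: "\<forall>N \<in> cnbh E S ` S. M \<subseteq> N \<longrightarrow> M = N"
    using finite_has_maximal2[of "cnbh E S ` S" "cnbh E S v"] assms by blast
  then obtain w where w: "w \<in> S" "M = cnbh E S w"
    by blast
  have "w \<notin> strict_corners E S"
    using max w unfolding strict_corners_def by blast
  with w M that show ?thesis
    by blast
qed

lemma non_strict_corner_exists:
  assumes "finite S" and "S \<noteq> {}"
  shows "S - strict_corners E S \<noteq> {}"
  using assms exists_non_strict_corner_dominator[of S] by blast

lemma cnbh_eq_if_not_strict_corner:
  assumes "v \<in> S" "w \<in> S" "v \<notin> strict_corners E S" "cnbh E S v \<subseteq> cnbh E S w"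
  shows "cnbh E S v = cnbh E S w"
  using assms unfolding strict_corners_def by (cases "v = w") auto

lemma strict_corner_if_strict_corner_of_remove:
  assumes "v \<in> strict_corners E (H - {u})" and "\<not> E v u"
  shows "v \<in> strict_corners E H"
proof -
  obtain w where w: "w \<in> H - {u}" "w \<noteq> v" "cnbh E (H - {u}) v \<subset> cnbh E (H - {u}) w"
    using assms(1) unfolding strict_corners_def by blast
  have "cnbh E H v = cnbh E (H - {u}) v"
    using assms(2) by auto
  also have "\<dots> \<subset> cnbh E (H - {u}) w"
    using w(3) .
  also have "\<dots> \<subseteq> cnbh E H w"
    by auto
  finally show ?thesis
    using assms(1) w unfolding strict_corners_def by auto
qed

lemma clique_remove_if_universal:
  assumes "y \<in> H" "\<forall>x\<in>H. E y x" "strict_corners E H \<subseteq> {u}"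
  shows "is_clique E (H - {u})"
  unfolding is_clique_def
proof (intro ballI)
  fix a b assume a: "a \<in> H - {u}" and b: "b \<in> H - {u}"
  have "cnbh E H a = cnbh E H y"
    using a assms by (intro cnbh_eq_if_not_strict_corner) auto
  then show "E a b"
    using assms(2) a b by auto
qed

text \<open>Let z strictly corner u. A non-corner w of H - {u} dominating z sees every corner of H - {u}
  (these are adjacent to u, hence to z) and, by the clique hypothesis, every non-corner. Either w
  also sees u, or every vertex missing u is universal in H - {u}, and then z is universal.\<close>

lemma universal_vertex_if_unique_strict_corner:
  assumes fin: "finite H"
    and refl: "\<forall>x\<in>H. E x x"
    and sym: "\<forall>x\<in>H. \<forall>y\<in>H. E x y \<longrightarrow> E y x"
    and corner: "strict_corners E H = {u}"
    and clique: "is_clique E (H - {u} - strict_corners E (H - {u}))"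
  shows "\<exists>y\<in>H. \<forall>x\<in>H. E y x"
proof -
  have u: "u \<in> H"
    using corner unfolding strict_corners_def by auto
  obtain z where z: "z \<in> H - {u}" "cnbh E H u \<subset> cnbh E H z"
    using corner unfolding strict_corners_def by blast
  have z_dom: "E z x" if "x \<in> H" "E x u" for x
  proof -
    have "x \<in> cnbh E H u"
      using sym u that by simp
    then show ?thesis
      using z by auto
  qed
  have corners_adj_z: "E z v" if v: "v \<in> strict_corners E (H - {u})" for v
  proof -
    have "v \<in> H - {u}"
      using v unfolding strict_corners_def by auto
    with v corner strict_corner_if_strict_corner_of_remove have "E v u"
      by fastforce
    with \<open>v \<in> H - {u}\<close> show ?thesis
      using z_dom by auto
  qed
  obtain w where w: "w \<in> H - {u} - strict_corners E (H - {u})"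
    and w_dom: "cnbh E (H - {u}) z \<subseteq> cnbh E (H - {u}) w"
    using exists_non_strict_corner_dominator[of "H - {u}" z] fin z by blast
  have w_adj: "E w x" if "x \<in> H - {u}" for x
  proof (cases "x \<in> strict_corners E (H - {u})")
    case True
    then have "x \<in> cnbh E (H - {u}) z"
      using corners_adj_z that by simp
    then show ?thesis
      using w_dom by auto
  next
    case False
    then show ?thesis
      using clique w that unfolding is_clique_def by auto
  qed
  show ?thesis
  proof (cases "E w u")
    case True
    then show ?thesis
      using w w_adj by blast
  next
    case False
    have cnbh_w: "cnbh E H w = H - {u}"
    proof
      show "cnbh E H w \<subseteq> H - {u}"
        using False by auto
      show "H - {u} \<subseteq> cnbh E H w"
        using w_adj by (simp add: subset_iff)
    qed
    have far_universal: "E v x" if v: "v \<in> H - {u}" "\<not> E v u" and x: "x \<in> H - {u}" for v x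
    proof -
      have "v \<notin> strict_corners E H"
        using v corner by blast
      moreover have "cnbh E H v \<subseteq> cnbh E H w"
        unfolding cnbh_w using v(2) by auto
      ultimately have "cnbh E H v = cnbh E H w"
        using v(1) w by (intro cnbh_eq_if_not_strict_corner) simp_all
      then have "x \<in> cnbh E H v"
        using x cnbh_w by (simp only:)
      then show ?thesis
        by simp
    qed
    have "E z x" if x: "x \<in> H" for x
    proof (cases "E x u")
      case True
      then show ?thesis
        using z_dom x by blast
    next
      case False
      then have "x \<noteq> u"
        using refl u by blast
      then have "E x z"
        using far_universal x False z by blast
      then show ?thesis
        using sym x z by blast
    qed
    then show ?thesis
      using z by blast
  qed
qed

lemma clique_remove_unique_strict_corner:
  assumes "finite H"
    and "\<forall>x\<in>H. E x x"
    and "\<forall>x\<in>H. \<forall>y\<in>H. E x y \<longrightarrow> E y x"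
    and corner: "strict_corners E H = {u}"
    and "is_clique E (H - {u} - strict_corners E (H - {u}))"
  shows "is_clique E (H - {u})"
proof -
  obtain y where "y \<in> H" "\<forall>x\<in>H. E y x"
    using universal_vertex_if_unique_strict_corner[OF assms] by blast
  then show ?thesis
    using corner by (intro clique_remove_if_universal) simp_all
qed

lemma stage_subset: "stage E V k \<subseteq> V"
  by (induction k) auto

lemma stage_Suc_non_clique:
  "\<not> is_clique E (stage E V k) \<Longrightarrow> stage E V (Suc k) = stage E V k - strict_corners E (stage E V k)"
  by simp

lemma non_clique_if_stage_Suc_nonempty:
  "stage E V (Suc k) \<noteq> {} \<Longrightarrow> \<not> is_clique E (stage E V k)"
  by auto

lemma clique_if_stage_Suc_empty:
  assumes "finite V" "stage E V k \<noteq> {}" "stage E V (Suc k) = {}"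
  shows "is_clique E (stage E V k)"
proof (rule ccontr)
  assume "\<not> is_clique E (stage E V k)"
  moreover have "finite (stage E V k)"
    using assms(1) stage_subset by (rule finite_subset[rotated])
  ultimately show False
    using assms(2,3) non_strict_corner_exists[of "stage E V k" E] by simp
qed

lemma rank_set_Suc_non_clique:
  "\<not> is_clique E (stage E V k) \<Longrightarrow> rank_set E V (Suc k) = strict_corners E (stage E V k)"
  by (simp add: rank_set_def)

lemma stage_corner_rank:
  assumes "cop_win V E"
  shows "stage E V (corner_rank V E) = {}"
  unfolding corner_rank_def by (rule LeastI_ex) (use assms in \<open>simp add: cop_win_def\<close>)

lemma stage_nonempty_below_corner_rank:
  "k < corner_rank V E \<Longrightarrow> stage E V k \<noteq> {}"
  unfolding corner_rank_def by (rule not_less_Least)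

lemma length_rank_card_vector: "length (rank_card_vector V E) = corner_rank V E"
  by (simp add: rank_card_vector_def)

lemma nth_rank_card_vector:
  assumes "i < corner_rank V E"
  shows "rank_card_vector V E ! i = card (rank_set E V (corner_rank V E - i))"
  using assms unfolding rank_card_vector_def by (simp add: rev_nth Suc_diff_Suc del: upt_Suc)

lemma last_three_stages:
  assumes cop_win: "cop_win V E"
    and rank: "corner_rank V E = Suc (Suc (Suc j))"
    and card: "card (rank_set E V (Suc j)) = 1"
  obtains u where "strict_corners E (stage E V j) = {u}"
    and "\<not> is_clique E (stage E V j - {u})"
    and "is_clique E (stage E V j - {u} - strict_corners E (stage E V j - {u}))"
proof -
  define H where "H = stage E V j"
  have nonempty: "stage E V (Suc j) \<noteq> {}" "stage E V (Suc (Suc j)) \<noteq> {}"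
    using stage_nonempty_below_corner_rank[of _ V E] rank by (simp_all del: stage.simps)
  have H_non_clique: "\<not> is_clique E H"
    unfolding H_def by (rule non_clique_if_stage_Suc_nonempty[OF nonempty(1)])
  then have "card (strict_corners E H) = 1"
    using card rank_set_Suc_non_clique[OF H_non_clique[unfolded H_def]] unfolding H_def by simp
  then obtain u where corner: "strict_corners E H = {u}"
    by (rule card_1_singletonE)
  have stage_remove_u: "stage E V (Suc j) = H - {u}"
    using H_non_clique corner H_def by simp
  then have H'_non_clique: "\<not> is_clique E (H - {u})"
    using non_clique_if_stage_Suc_nonempty[OF nonempty(2)] by simp
  have "stage E V (Suc (Suc j)) = H - {u} - strict_corners E (H - {u})"
    using stage_Suc_non_clique[of E V "Suc j"] H'_non_clique unfolding stage_remove_u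
    by (simp del: stage.simps)
  moreover have "is_clique E (stage E V (Suc (Suc j)))"
    using stage_corner_rank[OF cop_win] rank cop_win
    by (intro clique_if_stage_Suc_empty[OF _ nonempty(2)]) (simp_all add: cop_win_def refl_graph_def del: stage.simps)
  ultimately show ?thesis
    using that corner H'_non_clique unfolding H_def by simp
qed

theorem lemma3p20:
  fixes xs :: "nat list"
  assumes "\<forall>x\<in>set xs. x > 0"
    and "length xs \<ge> 3"
    and "xs ! 2 = 1"
  shows "\<not> realizable xs"
proof
  assume "realizable xs"
  then obtain V :: "nat set" and E where cop_win: "cop_win V E" and xs: "rank_card_vector V E = xs"
    unfolding realizable_def by blast
  define j where "j = corner_rank V E - 3"
  have rank: "corner_rank V E = Suc (Suc (Suc j))"
    using assms(2) xs length_rank_card_vector[of V E] unfolding j_def by simp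
  have "card (rank_set E V (Suc j)) = 1"
    using assms(3) xs nth_rank_card_vector[of 2 V E] rank by simp
  then obtain u where corner: "strict_corners E (stage E V j) = {u}"
    and non_clique: "\<not> is_clique E (stage E V j - {u})"
    and clique: "is_clique E (stage E V j - {u} - strict_corners E (stage E V j - {u}))"
    using last_three_stages[OF cop_win rank] by blast
  have "stage E V j \<subseteq> V"
    by (rule stage_subset)
  then have graph: "finite (stage E V j)" "\<forall>x\<in>stage E V j. E x x"
    "\<forall>x\<in>stage E V j. \<forall>y\<in>stage E V j. E x y \<longrightarrow> E y x"
    using cop_win finite_subset unfolding cop_win_def refl_graph_def by blast+
  from clique_remove_unique_strict_corner[OF graph corner clique] non_clique show False
    by contradiction
qed

end
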